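(* Let $f:\mathbb{R}^n\to\mathbb{R}$ be convex and $L$-smooth for some $L>0$, and suppose $f$ has a minimizer $x^\star\in\mathbb{R}^n$. Let $\{x^k\}$, $\{t_k\}$ be generated by APBM with models $\hat f^k$ satisfying, for every $k\ge1$: (a) $\hat f^k$ is convex; (b) $\hat f^k(x)\ge f(y^k)+\langle\nabla f(y^k),x-y^k\rangle$ for all $x\in\mathbb{R}^n$; (c) $\hat f^k(x)\le f(x)$ for all $x\in\mathbb{R}^n$. Then for every $k\ge1$, $$f(x^k)-f(x^\star)\le\frac{L\|x^0-x^\star\|^2}{2t_k^2}.$$
   Context: APBM (accelerated proximal bundle method) for minimizing $f$: given $L>0$ and an initial point $x^0\in\mathbb{R}^n$, set $y^1=x^0$ and $t_1=1$. For $k=1,2,\dots$, given a model $\hat f^k:\mathbb{R}^n\to\mathbb{R}$, set $x^k=\arg\min_{x\in\mathbb{R}^n}\ \hat f^k(x)+\frac{L}{2}\|x-y^k\|^2$, $t_{k+1}=\frac{1+\sqrt{1+4t_k^2}}{2}$, $y^{k+1}=x^k+\frac{t_k-1}{t_{k+1}}(x^k-x^{k-1})$. A differentiable $f$ is $L$-smooth if $\|\nabla f(x)-\nabla f(y)\|\le L\|x-y\|$ for all $x,y\in\mathbb{R}^n$ (Euclidean norm). *)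

theory Defs
  imports "HOL-Analysis.Analysis"
begin

end

theory Submission
  imports Defs
begin

text \<open>
  The argument is the FISTA analysis with the proximal gradient step replaced by a proximal step
  on the model. Since the model lies between the linearisation of \<open>f\<close> at \<open>y\<^sup>k\<close> and \<open>f\<close>
  itself, the descent lemma for \<open>L\<close>-smooth functions and the three-point property of a
  proximal step on a convex function give, for every \<open>z\<close>,
  \<open>f(x\<^sup>k) \<le> f(z) + L/2 (\<parallel>z - y\<^sup>k\<parallel>\<^sup>2 - \<parallel>z - x\<^sup>k\<parallel>\<^sup>2)\<close>.
  Choosing \<open>z = (1 - 1/t\<^sub>k\<^sub>+\<^sub>1) x\<^sup>k + (1/t\<^sub>k\<^sub>+\<^sub>1) x\<^sup>\<star>\<close> and using
  \<open>t\<^sub>k\<^sub>+\<^sub>1\<^sup>2 - t\<^sub>k\<^sub>+\<^sub>1 = t\<^sub>k\<^sup>2\<close> shows that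
  \<open>E\<^sub>k = t\<^sub>k\<^sup>2 (f(x\<^sup>k) - f(x\<^sup>\<star>)) + L/2 \<parallel>t\<^sub>k x\<^sup>k - (t\<^sub>k - 1) x\<^sup>k\<^sup>-\<^sup>1 - x\<^sup>\<star>\<parallel>\<^sup>2\<close>
  is nonincreasing, and \<open>E\<^sub>1 \<le> L/2 \<parallel>x\<^sup>0 - x\<^sup>\<star>\<parallel>\<^sup>2\<close>.
\<close>

lemma norm_convex_combination_sq:
  fixes a b :: "'a::real_inner"
  shows "(norm ((1 - l) *\<^sub>R a + l *\<^sub>R b))\<^sup>2
    = (1 - l) * (norm a)\<^sup>2 + l * (norm b)\<^sup>2 - l * (1 - l) * (norm (a - b))\<^sup>2"
  by (simp add: power2_norm_eq_inner inner_commute algebra_simps)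

lemma lipschitz_gradient_upper_bound:
  fixes f :: "'a::real_inner \<Rightarrow> real" and grad :: "'a \<Rightarrow> 'a"
  assumes f_grad: "\<And>z. (f has_derivative (\<lambda>h. grad z \<bullet> h)) (at z)"
    and grad_lipschitz: "\<And>u v. norm (grad u - grad v) \<le> L * norm (u - v)"
  shows "f x \<le> f y + grad y \<bullet> (x - y) + L / 2 * (norm (x - y))\<^sup>2"
proof -
  define d where "d = x - y"
  define h where "h s = f (y + s *\<^sub>R d) - s * (grad y \<bullet> d) - L / 2 * s\<^sup>2 * (norm d)\<^sup>2" for s
  have deriv: "DERIV h s :> grad (y + s *\<^sub>R d) \<bullet> d - grad y \<bullet> d - L * s * (norm d)\<^sup>2" for s
  proof -
    have "((\<lambda>s. f (y + s *\<^sub>R d)) has_derivative (\<lambda>r. grad (y + s *\<^sub>R d) \<bullet> (r *\<^sub>R d))) (at s)"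
      by (rule has_derivative_compose[OF _ f_grad]) (auto intro!: derivative_eq_intros)
    then have "((\<lambda>s. f (y + s *\<^sub>R d)) has_real_derivative grad (y + s *\<^sub>R d) \<bullet> d) (at s)"
      unfolding has_field_derivative_def by (rule has_derivative_eq_rhs) (simp add: fun_eq_iff)
    then show ?thesis
      unfolding h_def by (auto intro!: derivative_eq_intros)
  qed
  have nonpos: "grad (y + s *\<^sub>R d) \<bullet> d - grad y \<bullet> d - L * s * (norm d)\<^sup>2 \<le> 0" if "0 \<le> s" for s
  proof -
    have "(grad (y + s *\<^sub>R d) - grad y) \<bullet> d \<le> norm (grad (y + s *\<^sub>R d) - grad y) * norm d"
      by (rule norm_cauchy_schwarz)
    also have "\<dots> \<le> L * (s * norm d) * norm d"
      using grad_lipschitz[of "y + s *\<^sub>R d" y] that by (simp add: mult_right_mono)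
    finally show ?thesis by (simp add: power2_eq_square mult.assoc inner_diff_left)
  qed
  have "\<exists>D. DERIV h s :> D \<and> D \<le> 0" if "0 \<le> s" for s
    using deriv nonpos[OF that] by blast
  then have "h 1 \<le> h 0"
    using DERIV_nonpos_imp_nonincreasing[of 0 1 h] by simp
  then show ?thesis
    by (simp add: h_def d_def)
qed

lemma le_of_forall_le_add_mult:
  fixes a b c :: real
  assumes "\<And>l. 0 < l \<Longrightarrow> l \<le> 1 \<Longrightarrow> a \<le> b + l * c"
  shows "a \<le> b"
proof (rule tendsto_lowerbound)
  show "((\<lambda>l. b + l * c) \<longlongrightarrow> b) (at_right 0)"
    by (auto intro!: tendsto_eq_intros)
  show "\<forall>\<^sub>F l in at_right 0. a \<le> b + l * c"
    using assms by (auto simp: eventually_at_right_field intro: exI[of _ 1])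
qed simp

lemma prox_three_point:
  fixes g :: "'a::real_inner \<Rightarrow> real"
  assumes g_convex: "convex_on UNIV g"
    and x_min: "\<And>w. g x + L / 2 * (norm (x - y))\<^sup>2 \<le> g w + L / 2 * (norm (w - y))\<^sup>2"
  shows "g x + L / 2 * (norm (x - y))\<^sup>2 + L / 2 * (norm (z - x))\<^sup>2 \<le> g z + L / 2 * (norm (z - y))\<^sup>2"
proof -
  define \<phi> where "\<phi> w = g w + L / 2 * (norm (w - y))\<^sup>2" for w
  define c where "c = L / 2 * (norm (z - x))\<^sup>2"
  have "\<phi> x + c \<le> \<phi> z + l * c" if l: "0 < l" "l \<le> 1" for l
  proof -
    define w where "w = (1 - l) *\<^sub>R x + l *\<^sub>R z"
    have sq: "(norm (w - y))\<^sup>2 = (1 - l) * (norm (x - y))\<^sup>2 + l * (norm (z - y))\<^sup>2 - l * (1 - l) * (norm (z - x))\<^sup>2"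
      using norm_convex_combination_sq[of l "x - y" "z - y"]
      by (simp add: w_def algebra_simps norm_minus_commute)
    have "g w \<le> (1 - l) * g x + l * g z"
      using convex_onD[OF g_convex] l by (simp add: w_def)
    then have "\<phi> w \<le> (1 - l) * \<phi> x + l * \<phi> z - l * (1 - l) * c"
      unfolding \<phi>_def c_def sq by (simp add: field_simps)
    moreover have "\<phi> x \<le> \<phi> w"
      using x_min by (simp add: \<phi>_def)
    ultimately have "l * (\<phi> x + c) \<le> l * (\<phi> z + l * c)"
      by (simp add: algebra_simps)
    then show ?thesis
      using l by simp
  qed
  then have "\<phi> x + c \<le> \<phi> z"
    by (rule le_of_forall_le_add_mult)
  then show ?thesis
    by (simp add: \<phi>_def c_def)
qed

lemma model_prox_step_bound:
  fixes f g :: "'a::real_inner \<Rightarrow> real" and grad :: "'a \<Rightarrow> 'a"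
  assumes f_grad: "\<And>z. (f has_derivative (\<lambda>h. grad z \<bullet> h)) (at z)"
    and grad_lipschitz: "\<And>u v. norm (grad u - grad v) \<le> L * norm (u - v)"
    and g_convex: "convex_on UNIV g"
    and g_lower: "\<And>z. f y + grad y \<bullet> (z - y) \<le> g z"
    and g_upper: "\<And>z. g z \<le> f z"
    and x_min: "\<And>z. g x + L / 2 * (norm (x - y))\<^sup>2 \<le> g z + L / 2 * (norm (z - y))\<^sup>2"
  shows "f x \<le> f z + L / 2 * ((norm (z - y))\<^sup>2 - (norm (z - x))\<^sup>2)"
proof -
  have "f x \<le> f y + grad y \<bullet> (x - y) + L / 2 * (norm (x - y))\<^sup>2"
    by (rule lipschitz_gradient_upper_bound[OF f_grad grad_lipschitz])
  also have "\<dots> \<le> g x + L / 2 * (norm (x - y))\<^sup>2"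
    using g_lower[of x] by simp
  also have "\<dots> \<le> g z + L / 2 * (norm (z - y))\<^sup>2 - L / 2 * (norm (z - x))\<^sup>2"
    using prox_three_point[OF g_convex x_min, of z] by simp
  also have "\<dots> \<le> f z + L / 2 * ((norm (z - y))\<^sup>2 - (norm (z - x))\<^sup>2)"
    using g_upper[of z] by (simp add: right_diff_distrib)
  finally show ?thesis .
qed

lemma fista_momentum_ge_one: "1 \<le> (1 + sqrt (1 + 4 * s\<^sup>2)) / (2::real)"
  by simp

lemma fista_momentum_eq:
  fixes s :: real
  defines "T \<equiv> (1 + sqrt (1 + 4 * s\<^sup>2)) / 2"
  shows "T\<^sup>2 - T = s\<^sup>2"
proof -
  have "(sqrt (1 + 4 * s\<^sup>2))\<^sup>2 = 1 + 4 * s\<^sup>2"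
    by simp
  then show ?thesis
    unfolding T_def by (simp add: power2_eq_square field_simps)
qed

lemma fista_lyapunov_step:
  fixes f :: "'a::real_inner \<Rightarrow> real"
  assumes f_convex: "convex_on UNIV f"
    and T_ge: "1 \<le> T" and T_eq: "T\<^sup>2 - T = s\<^sup>2"
    and y': "y' = x + ((s - 1) / T) *\<^sub>R (x - x_prev)"
    and prox: "\<And>z. f x' \<le> f z + L / 2 * ((norm (z - y'))\<^sup>2 - (norm (z - x'))\<^sup>2)"
  shows "T\<^sup>2 * (f x' - f xstar) + L / 2 * (norm (T *\<^sub>R x' - (T - 1) *\<^sub>R x - xstar))\<^sup>2
    \<le> s\<^sup>2 * (f x - f xstar) + L / 2 * (norm (s *\<^sub>R x - (s - 1) *\<^sub>R x_prev - xstar))\<^sup>2"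
proof -
  define z where "z = (1 - 1 / T) *\<^sub>R x + (1 / T) *\<^sub>R xstar"
  have Tz: "T *\<^sub>R z = (T - 1) *\<^sub>R x + xstar"
    using T_ge by (simp add: z_def scaleR_add_right algebra_simps)
  have Ty': "T *\<^sub>R y' = T *\<^sub>R x + (s - 1) *\<^sub>R (x - x_prev)"
    using T_ge by (simp add: y' scaleR_add_right)
  have "T *\<^sub>R (z - x') = - (T *\<^sub>R x' - (T - 1) *\<^sub>R x - xstar)"
    and "T *\<^sub>R (z - y') = - (s *\<^sub>R x - (s - 1) *\<^sub>R x_prev - xstar)"
    unfolding scaleR_diff_right Tz Ty' by (simp_all add: algebra_simps)
  then have norm_x': "(norm (T *\<^sub>R x' - (T - 1) *\<^sub>R x - xstar))\<^sup>2 = T\<^sup>2 * (norm (z - x'))\<^sup>2"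
    and norm_x: "(norm (s *\<^sub>R x - (s - 1) *\<^sub>R x_prev - xstar))\<^sup>2 = T\<^sup>2 * (norm (z - y'))\<^sup>2"
    using T_ge by (metis norm_minus_cancel norm_scaleR abs_of_nonneg power_mult_distrib zero_le_one order_trans)+
  have "f z \<le> (1 - 1 / T) * f x + (1 / T) * f xstar"
    unfolding z_def using T_ge by (intro convex_onD[OF f_convex]) auto
  then have f_z: "T * f z \<le> (T - 1) * f x + f xstar"
    using mult_left_mono[of _ _ T] T_ge by (fastforce simp: field_simps)
  have "T\<^sup>2 * f x' \<le> T\<^sup>2 * f z + L / 2 * (T\<^sup>2 * (norm (z - y'))\<^sup>2 - T\<^sup>2 * (norm (z - x'))\<^sup>2)"
    using mult_left_mono[OF prox[of z], of "T\<^sup>2"] by (simp add: algebra_simps)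
  also have "T\<^sup>2 * f z \<le> (T\<^sup>2 - T) * f x + T * f xstar"
    using mult_left_mono[OF f_z, of T] T_ge by (simp add: power2_eq_square algebra_simps)
  finally show ?thesis
    unfolding norm_x norm_x' T_eq[symmetric] by (simp add: algebra_simps)
qed

theorem theorem1:
  fixes f :: "'a::euclidean_space \<Rightarrow> real"
    and grad :: "'a \<Rightarrow> 'a"
    and L :: real
    and xstar :: "'a"
    and x y :: "nat \<Rightarrow> 'a"
    and t :: "nat \<Rightarrow> real"
    and fhat :: "nat \<Rightarrow> 'a \<Rightarrow> real"
  assumes L_pos: "L > 0"
    and f_convex: "convex_on UNIV f"
    and f_grad: "\<And>z. (f has_derivative (\<lambda>h. grad z \<bullet> h)) (at z)"
    and f_smooth: "\<And>u v. norm (grad u - grad v) \<le> L * norm (u - v)"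
    and xstar_min: "\<And>z. f xstar \<le> f z"
    and y1: "y 1 = x 0"
    and t1: "t 1 = 1"
    and x_step: "\<And>k z. k \<ge> 1 \<Longrightarrow>
        fhat k (x k) + L / 2 * (norm (x k - y k))\<^sup>2 \<le> fhat k z + L / 2 * (norm (z - y k))\<^sup>2"
    and t_step: "\<And>k. k \<ge> 1 \<Longrightarrow> t (k + 1) = (1 + sqrt (1 + 4 * (t k)\<^sup>2)) / 2"
    and y_step: "\<And>k. k \<ge> 1 \<Longrightarrow>
        y (k + 1) = x k + ((t k - 1) / t (k + 1)) *\<^sub>R (x k - x (k - 1))"
    and model_convex: "\<And>k. k \<ge> 1 \<Longrightarrow> convex_on UNIV (fhat k)"
    and model_lower: "\<And>k z. k \<ge> 1 \<Longrightarrow> fhat k z \<ge> f (y k) + grad (y k) \<bullet> (z - y k)"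
    and model_upper: "\<And>k z. k \<ge> 1 \<Longrightarrow> fhat k z \<le> f z"
  shows "\<And>k. k \<ge> 1 \<Longrightarrow> f (x k) - f xstar \<le> L * (norm (x 0 - xstar))\<^sup>2 / (2 * (t k)\<^sup>2)"
proof -
  have t_succ_ge: "1 \<le> t (k + 1)" if "1 \<le> k" for k
    unfolding t_step[OF that] by (rule fista_momentum_ge_one)
  have t_ge: "1 \<le> t k" if "1 \<le> k" for k
    using that by (induction k rule: dec_induct) (use t1 t_succ_ge in auto)
  have t_sq: "(t (k + 1))\<^sup>2 - t (k + 1) = (t k)\<^sup>2" if "1 \<le> k" for k
    unfolding t_step[OF that] by (rule fista_momentum_eq)
  have prox: "f (x k) \<le> f z + L / 2 * ((norm (z - y k))\<^sup>2 - (norm (z - x k))\<^sup>2)" if "1 \<le> k" for k z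
    using model_prox_step_bound[OF f_grad f_smooth model_convex[OF that] model_lower[OF that]
        model_upper[OF that] x_step[OF that]] .
  define E where "E k = (t k)\<^sup>2 * (f (x k) - f xstar)
    + L / 2 * (norm (t k *\<^sub>R x k - (t k - 1) *\<^sub>R x (k - 1) - xstar))\<^sup>2" for k
  have E_1: "E 1 \<le> L / 2 * (norm (x 0 - xstar))\<^sup>2"
    using prox[of 1 xstar] unfolding E_def t1 y1 by (simp add: norm_minus_commute algebra_simps)
  have E_step: "E (k + 1) \<le> E k" if "1 \<le> k" for k
    using fista_lyapunov_step[OF f_convex t_ge t_sq y_step prox] that by (simp add: E_def)
  have E_bound: "E k \<le> L / 2 * (norm (x 0 - xstar))\<^sup>2" if "1 \<le> k" for k
    using that by (induction k rule: dec_induct) (use E_1 E_step in \<open>force+\<close>)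
  show "f (x k) - f xstar \<le> L * (norm (x 0 - xstar))\<^sup>2 / (2 * (t k)\<^sup>2)" if "1 \<le> k" for k
  proof -
    have "0 \<le> L / 2 * (norm (t k *\<^sub>R x k - (t k - 1) *\<^sub>R x (k - 1) - xstar))\<^sup>2"
      using L_pos by simp
    then have "(t k)\<^sup>2 * (f (x k) - f xstar) \<le> L / 2 * (norm (x 0 - xstar))\<^sup>2"
      using E_bound[OF that] unfolding E_def by linarith
    then show ?thesis
      using t_ge[OF that] by (simp add: field_simps)
  qed
qed

end
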